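(* Let $(V,E,\sigma)$ be an influence graph and let $\mu : V \rightarrow \{+,-\}$ be a (partial) vertex labeling. If $(V,E,\sigma)$ and $\mu$ are consistent, then the disjunctive logic program $P_C\cup\tau((V,E,\sigma),\mu)$ has an answer set.
   Context: An influence graph is a triple $(V,E,\sigma)$ where $V$ is a finite set of vertices, $E\subseteq V\times V$ is a set of directed edges (an edge from $j$ to $i$ is written $j\rightarrow i$), and $\sigma : E\rightarrow\{+,-\}$ is a partial labeling of the edges; in addition, some vertices of $V$ are designated as input vertices. Signs are multiplied as numbers ($++=--=+$, $+-=-+=-$). Given a partial vertex labeling $\mu: V\rightarrow\{+,-\}$, the pair $(V,E,\sigma)$ and $\mu$ are called consistent if there exist total extensions $\sigma':E\rightarrow\{+,-\}$ of $\sigma$ and $\mu':V\rightarrow\{+,-\}$ of $\mu$ such that for every non-input vertex $i\in V$ there is an edge $j\rightarrow i$ in $E$ with $\mu'(i)=\mu'(j)\sigma'(j,i)$. Answer set semantics: a disjunctive logic program is a set of rules $a_1;\dots;a_l \leftarrow b_1,\dots,b_m,\mathit{not}\ c_1,\dots,\mathit{not}\ c_n$ (with $l=0$ giving an integrity constraint, whose empty head is false). Rules with (capitalized) variables stand for all their ground instances obtained by substituting constants occurring in the program; a built-in comparison $S\neq T$ in a body keeps only instances where the substituted constants differ. For a set $X$ of ground atoms, the reduct $P^X$ consists of $\{a_1,\dots,a_l\}\leftarrow b_1,\dots,b_m$ for each ground rule with $\{c_1,\dots,c_n\}\cap X=\emptyset$; $X$ is an answer set of $P$ if it is a $\subseteq$-minimal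 model of $P^X$ (a rule is satisfied if some head atom is in $X$ whenever all $b_k$ are in $X$). Here $+$ and $-$ are constants and vertex names are constants. The instance $\tau((V,E,\sigma),\mu)$ is the set of facts: $\mathit{vertex}(i)$ for each $i\in V$; $\mathit{edge}(j,i)$ for each $j\rightarrow i$ in $E$; $\mathit{observedE}(j,i,s)$ whenever $\sigma(j,i)=s$ is defined; $\mathit{observedV}(i,s)$ whenever $\mu(i)=s$ is defined; $\mathit{input}(i)$ for each input vertex $i$. The program $P_C$ consists of the rules $\mathit{labelV}(V,+);\mathit{labelV}(V,-)\leftarrow \mathit{vertex}(V)$; $\mathit{labelE}(U,V,+);\mathit{labelE}(U,V,-)\leftarrow \mathit{edge}(U,V)$; $\mathit{labelV}(V,S)\leftarrow \mathit{observedV}(V,S)$; $\mathit{labelE}(U,V,S)\leftarrow \mathit{observedE}(U,V,S)$; $\mathit{receive}(V,+)\leftarrow \mathit{labelE}(U,V,S),\mathit{labelV}(U,S)$; $\mathit{receive}(V,-)\leftarrow \mathit{labelE}(U,V,S),\mathit{labelV}(U,T),S\neq T$; $\leftarrow \mathit{labelV}(V,S),\mathit{not}\ \mathit{receive}(V,S),\mathit{not}\ \mathit{input}(V)$. *)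

theory Defs
  imports Main
begin

datatype sign = Pos | Neg

fun sign_mult :: "sign \<Rightarrow> sign \<Rightarrow> sign" where
  "sign_mult Pos s = s"
| "sign_mult Neg Pos = Neg"
| "sign_mult Neg Neg = Pos"

text \<open>An influence graph: finite vertex set V, edges E \<subseteq> V \<times> V (a pair (j,i) is the
edge j \<rightarrow> i), a partial edge labelling sigma defined only on edges, and a set I of input
vertices.\<close>
definition influence_graph ::
  "'v set \<Rightarrow> ('v \<times> 'v) set \<Rightarrow> ('v \<times> 'v \<rightharpoonup> sign) \<Rightarrow> 'v set \<Rightarrow> bool" where
  "influence_graph V E \<sigma> I \<longleftrightarrow> finite V \<and> E \<subseteq> V \<times> V \<and> dom \<sigma> \<subseteq> E \<and> I \<subseteq> V"

definition partial_vlabel :: "'v set \<Rightarrow> ('v \<rightharpoonup> sign) \<Rightarrow> bool" where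
  "partial_vlabel V \<mu> \<longleftrightarrow> dom \<mu> \<subseteq> V"

definition consistent ::
  "'v set \<Rightarrow> ('v \<times> 'v) set \<Rightarrow> ('v \<times> 'v \<rightharpoonup> sign) \<Rightarrow> 'v set \<Rightarrow> ('v \<rightharpoonup> sign) \<Rightarrow> bool" where
  "consistent V E \<sigma> I \<mu> \<longleftrightarrow>
     (\<exists>\<sigma>' :: 'v \<times> 'v \<Rightarrow> sign. \<exists>\<mu>' :: 'v \<Rightarrow> sign.
        (\<forall>e s. \<sigma> e = Some s \<longrightarrow> \<sigma>' e = s) \<and>
        (\<forall>i s. \<mu> i = Some s \<longrightarrow> \<mu>' i = s) \<and>
        (\<forall>i \<in> V - I. \<exists>j. (j, i) \<in> E \<and> \<mu>' i = sign_mult (\<mu>' j) (\<sigma>' (j, i))))"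

record 'a rule =
  head :: "'a set"
  pos  :: "'a set"
  neg  :: "'a set"

definition sat_rule :: "'a set \<Rightarrow> 'a rule \<Rightarrow> bool" where
  "sat_rule X r \<longleftrightarrow> (pos r \<subseteq> X \<longrightarrow> head r \<inter> X \<noteq> {})"

definition is_model :: "'a set \<Rightarrow> 'a rule set \<Rightarrow> bool" where
  "is_model X P \<longleftrightarrow> (\<forall>r \<in> P. sat_rule X r)"

definition reduct :: "'a rule set \<Rightarrow> 'a set \<Rightarrow> 'a rule set" where
  "reduct P X = {\<lparr>head = head r, pos = pos r, neg = {}\<rparr> | r. r \<in> P \<and> neg r \<inter> X = {}}"

definition answer_set :: "'a rule set \<Rightarrow> 'a set \<Rightarrow> bool" where
  "answer_set P X \<longleftrightarrow> is_model X (reduct P X) \<and> (\<forall>Y. Y \<subset> X \<longrightarrow> \<not> is_model Y (reduct P X))"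

datatype 'v const = Vx 'v | Sg sign

datatype 'v atom =
    vertex "'v const"
  | edge "'v const" "'v const"
  | observedE "'v const" "'v const" "'v const"
  | observedV "'v const" "'v const"
  | input "'v const"
  | labelV "'v const" "'v const"
  | labelE "'v const" "'v const" "'v const"
  | receive "'v const" "'v const"

definition fact :: "'a \<Rightarrow> 'a rule" where
  "fact a = \<lparr>head = {a}, pos = {}, neg = {}\<rparr>"

text \<open>The constants occurring in the program: all vertex names (each occurs in a fact
vertex(i)) together with + and - (which occur in P_C).\<close>
definition consts_of :: "'v set \<Rightarrow> 'v const set" where
  "consts_of V = Vx ` V \<union> {Sg Pos, Sg Neg}"

definition ground_PC :: "'v set \<Rightarrow> 'v atom rule set" where
  "ground_PC V = (let C = consts_of V; p = Sg Pos; m = Sg Neg in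
       {\<lparr>head = {labelV v p, labelV v m}, pos = {vertex v}, neg = {}\<rparr> | v. v \<in> C}
     \<union> {\<lparr>head = {labelE u v p, labelE u v m}, pos = {edge u v}, neg = {}\<rparr> | u v. u \<in> C \<and> v \<in> C}
     \<union> {\<lparr>head = {labelV v s}, pos = {observedV v s}, neg = {}\<rparr> | v s. v \<in> C \<and> s \<in> C}
     \<union> {\<lparr>head = {labelE u v s}, pos = {observedE u v s}, neg = {}\<rparr> | u v s. u \<in> C \<and> v \<in> C \<and> s \<in> C}
     \<union> {\<lparr>head = {receive v p}, pos = {labelE u v s, labelV u s}, neg = {}\<rparr>
          | u v s. u \<in> C \<and> v \<in> C \<and> s \<in> C}
     \<union> {\<lparr>head = {receive v m}, pos = {labelE u v s, labelV u t}, neg = {}\<rparr>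
          | u v s t. u \<in> C \<and> v \<in> C \<and> s \<in> C \<and> t \<in> C \<and> s \<noteq> t}
     \<union> {\<lparr>head = {}, pos = {labelV v s}, neg = {receive v s, input v}\<rparr> | v s. v \<in> C \<and> s \<in> C})"

definition tau ::
  "'v set \<Rightarrow> ('v \<times> 'v) set \<Rightarrow> ('v \<times> 'v \<rightharpoonup> sign) \<Rightarrow> 'v set \<Rightarrow> ('v \<rightharpoonup> sign) \<Rightarrow> 'v atom rule set" where
  "tau V E \<sigma> I \<mu> =
       {fact (vertex (Vx i)) | i. i \<in> V}
     \<union> {fact (edge (Vx j) (Vx i)) | j i. (j, i) \<in> E}
     \<union> {fact (observedE (Vx j) (Vx i) (Sg s)) | j i s. \<sigma> (j, i) = Some s}
     \<union> {fact (observedV (Vx i) (Sg s)) | i s. \<mu> i = Some s}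
     \<union> {fact (input (Vx i)) | i. i \<in> I}"

end

theory Submission
  imports Defs
begin

text \<open>Fix total extensions \<sigma>' and \<mu>' witnessing consistency. The candidate answer set
consists of the facts of the instance, the labels chosen by \<sigma>' and \<mu>', and every
sign a vertex receives along an edge under these labels. It is a model of its reduct
because consistency supplies, for each non-input vertex, an edge delivering its own
label; it is minimal because each of its atoms is the only head atom inside the
candidate of a reduct rule whose body is already forced.\<close>

lemma is_model_reduct_iff:
  "is_model Y (reduct P X) \<longleftrightarrow> (\<forall>r\<in>P. neg r \<inter> X = {} \<longrightarrow> sat_rule Y r)"
  unfolding is_model_def reduct_def sat_rule_def by fastforce

lemma answer_setI:
  assumes "is_model X (reduct P X)"
    and "\<And>Y. Y \<subseteq> X \<Longrightarrow> is_model Y (reduct P X) \<Longrightarrow> X \<subseteq> Y"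
  shows "answer_set P X"
  using assms unfolding answer_set_def by blast

lemma reduct_model_forces_head:
  assumes "is_model Y (reduct P X)" "Y \<subseteq> X" "r \<in> P" "neg r \<inter> X = {}"
    and "pos r \<subseteq> Y" "head r \<inter> X \<subseteq> {a}"
  shows "a \<in> Y"
  using assms unfolding is_model_reduct_iff sat_rule_def by blast

lemma reduct_model_contains_fact:
  assumes "is_model Y (reduct P X)" "Y \<subseteq> X" "fact a \<in> P"
  shows "a \<in> Y"
  using reduct_model_forces_head[OF assms] by (simp add: fact_def)

lemma sat_rule_fact [simp]: "sat_rule X (fact a) \<longleftrightarrow> a \<in> X"
  by (simp add: sat_rule_def fact_def)

lemma sign_mult_self [simp]: "sign_mult s s = Pos"
  by (cases s) auto

lemma Neg_neq_iff: "Neg \<noteq> s \<longleftrightarrow> s = Pos"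
  by (cases s) auto

lemma sign_mult_distinct: "s \<noteq> t \<Longrightarrow> sign_mult s t = Neg"
  by (cases s; cases t) auto

lemma Sg_in_consts_of [simp]: "Sg s \<in> consts_of V"
  by (cases s) (auto simp: consts_of_def)

lemma Vx_in_consts_of [simp]: "Vx i \<in> consts_of V \<longleftrightarrow> i \<in> V"
  by (auto simp: consts_of_def)

lemma ground_PC_guess_labelV:
  "v \<in> consts_of V \<Longrightarrow>
    \<lparr>head = {labelV v (Sg Pos), labelV v (Sg Neg)}, pos = {vertex v}, neg = {}\<rparr> \<in> ground_PC V"
  unfolding ground_PC_def Let_def by blast

lemma ground_PC_guess_labelE:
  "u \<in> consts_of V \<Longrightarrow> v \<in> consts_of V \<Longrightarrow>
    \<lparr>head = {labelE u v (Sg Pos), labelE u v (Sg Neg)}, pos = {edge u v}, neg = {}\<rparr> \<in> ground_PC V"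
  unfolding ground_PC_def Let_def by blast

lemma ground_PC_receive_Pos:
  "u \<in> consts_of V \<Longrightarrow> v \<in> consts_of V \<Longrightarrow> s \<in> consts_of V \<Longrightarrow>
    \<lparr>head = {receive v (Sg Pos)}, pos = {labelE u v s, labelV u s}, neg = {}\<rparr> \<in> ground_PC V"
  unfolding ground_PC_def Let_def by blast

lemma ground_PC_receive_Neg:
  "u \<in> consts_of V \<Longrightarrow> v \<in> consts_of V \<Longrightarrow> s \<in> consts_of V \<Longrightarrow> t \<in> consts_of V \<Longrightarrow> s \<noteq> t \<Longrightarrow>
    \<lparr>head = {receive v (Sg Neg)}, pos = {labelE u v s, labelV u t}, neg = {}\<rparr> \<in> ground_PC V"
  unfolding ground_PC_def Let_def by blast

lemma tau_facts: "r \<in> tau V E \<sigma> I \<mu> \<Longrightarrow> \<exists>a. r = fact a"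
  unfolding tau_def by blast

locale consistent_extension =
  fixes V :: "'v set" and E :: "('v \<times> 'v) set" and \<sigma> :: "'v \<times> 'v \<rightharpoonup> sign"
    and I :: "'v set" and \<mu> :: "'v \<rightharpoonup> sign"
    and \<sigma>' :: "'v \<times> 'v \<Rightarrow> sign" and \<mu>' :: "'v \<Rightarrow> sign"
  assumes graph: "influence_graph V E \<sigma> I"
    and vlabel: "partial_vlabel V \<mu>"
    and extends_\<sigma>: "\<sigma> e = Some s \<Longrightarrow> \<sigma>' e = s"
    and extends_\<mu>: "\<mu> i = Some s \<Longrightarrow> \<mu>' i = s"
    and supported: "i \<in> V - I \<Longrightarrow> \<exists>j. (j, i) \<in> E \<and> \<mu>' i = sign_mult (\<mu>' j) (\<sigma>' (j, i))"
begin

abbreviation program :: "'v atom rule set" where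
  "program \<equiv> ground_PC V \<union> tau V E \<sigma> I \<mu>"

definition instance_atoms :: "'v atom set" where
  "instance_atoms = {a. fact a \<in> tau V E \<sigma> I \<mu>}"

definition chosen_labels :: "'v atom set" where
  "chosen_labels = {labelV (Vx i) (Sg (\<mu>' i)) | i. i \<in> V}
     \<union> {labelE (Vx j) (Vx i) (Sg (\<sigma>' (j, i))) | j i. (j, i) \<in> E}"

definition received_signs :: "'v atom set" where
  "received_signs = {receive (Vx i) (Sg (sign_mult (\<mu>' j) (\<sigma>' (j, i)))) | j i. (j, i) \<in> E}"

definition candidate :: "'v atom set" where
  "candidate = instance_atoms \<union> chosen_labels \<union> received_signs"

lemma edge_in_V: "(j, i) \<in> E \<Longrightarrow> j \<in> V \<and> i \<in> V"
  using graph unfolding influence_graph_def by blast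

lemma observedE_in_E: "\<sigma> e = Some s \<Longrightarrow> e \<in> E"
  using graph unfolding influence_graph_def by blast

lemma observedV_in_V: "\<mu> i = Some s \<Longrightarrow> i \<in> V"
  using vlabel unfolding partial_vlabel_def by blast

lemma candidate_iff:
  "vertex a \<in> candidate \<longleftrightarrow> (\<exists>i\<in>V. a = Vx i)"
  "edge a b \<in> candidate \<longleftrightarrow> (\<exists>j i. (j, i) \<in> E \<and> a = Vx j \<and> b = Vx i)"
  "observedE a b c \<in> candidate \<longleftrightarrow> (\<exists>j i s. \<sigma> (j, i) = Some s \<and> a = Vx j \<and> b = Vx i \<and> c = Sg s)"
  "observedV a c \<in> candidate \<longleftrightarrow> (\<exists>i s. \<mu> i = Some s \<and> a = Vx i \<and> c = Sg s)"
  "input a \<in> candidate \<longleftrightarrow> (\<exists>i\<in>I. a = Vx i)"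
  "labelV a c \<in> candidate \<longleftrightarrow> (\<exists>i\<in>V. a = Vx i \<and> c = Sg (\<mu>' i))"
  "labelE a b c \<in> candidate \<longleftrightarrow> (\<exists>j i. (j, i) \<in> E \<and> a = Vx j \<and> b = Vx i \<and> c = Sg (\<sigma>' (j, i)))"
  "receive a c \<in> candidate \<longleftrightarrow>
     (\<exists>j i. (j, i) \<in> E \<and> a = Vx i \<and> c = Sg (sign_mult (\<mu>' j) (\<sigma>' (j, i))))"
  unfolding candidate_def instance_atoms_def chosen_labels_def received_signs_def tau_def fact_def
  by auto

lemma fact_in_tau_in_candidate: "fact a \<in> tau V E \<sigma> I \<mu> \<Longrightarrow> a \<in> candidate"
  unfolding candidate_def instance_atoms_def by blast

lemma candidate_sat_ground_PC:
  assumes "r \<in> ground_PC V" and "neg r \<inter> candidate = {}"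
  shows "sat_rule candidate r"
  using assms(1) unfolding ground_PC_def Let_def
proof (elim UnE CollectE exE conjE)
  fix v assume "r = \<lparr>head = {labelV v (Sg Pos), labelV v (Sg Neg)}, pos = {vertex v}, neg = {}\<rparr>"
  then show ?thesis
    by (auto simp: sat_rule_def candidate_iff Neg_neq_iff)
next
  fix u v assume "r = \<lparr>head = {labelE u v (Sg Pos), labelE u v (Sg Neg)}, pos = {edge u v}, neg = {}\<rparr>"
  then show ?thesis
    by (auto simp: sat_rule_def candidate_iff Neg_neq_iff)
next
  fix v s assume "r = \<lparr>head = {labelV v s}, pos = {observedV v s}, neg = {}\<rparr>"
  then show ?thesis
    by (auto simp: sat_rule_def candidate_iff dest: extends_\<mu> observedV_in_V)
next
  fix u v s assume "r = \<lparr>head = {labelE u v s}, pos = {observedE u v s}, neg = {}\<rparr>"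
  then show ?thesis
    by (auto simp: sat_rule_def candidate_iff dest: extends_\<sigma> observedE_in_E)
next
  fix u v s assume "r = \<lparr>head = {receive v (Sg Pos)}, pos = {labelE u v s, labelV u s}, neg = {}\<rparr>"
  then show ?thesis
    by (auto simp: sat_rule_def candidate_iff) (metis sign_mult_self)
next
  fix u v s t
  assume "r = \<lparr>head = {receive v (Sg Neg)}, pos = {labelE u v s, labelV u t}, neg = {}\<rparr>" "s \<noteq> t"
  then show ?thesis
    by (auto simp: sat_rule_def candidate_iff) (metis sign_mult_distinct)
next
  fix v s assume "r = \<lparr>head = {}, pos = {labelV v s}, neg = {receive v s, input v}\<rparr>"
  then show ?thesis
    using assms(2) supported by (auto simp: sat_rule_def candidate_iff)
qed

lemma candidate_model: "is_model candidate (reduct program candidate)"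
  unfolding is_model_reduct_iff
  using candidate_sat_ground_PC tau_facts fact_in_tau_in_candidate by fastforce

context
  fixes Y :: "'v atom set"
  assumes Y_sub: "Y \<subseteq> candidate"
    and Y_model: "is_model Y (reduct program candidate)"
begin

lemma instance_atoms_forced: "instance_atoms \<subseteq> Y"
  using reduct_model_contains_fact[OF Y_model Y_sub] unfolding instance_atoms_def by blast

lemma chosen_labels_forced: "chosen_labels \<subseteq> Y"
proof
  fix a assume "a \<in> chosen_labels"
  then consider (vertex) i where "i \<in> V" "a = labelV (Vx i) (Sg (\<mu>' i))"
    | (edge) j i where "(j, i) \<in> E" "a = labelE (Vx j) (Vx i) (Sg (\<sigma>' (j, i)))"
    unfolding chosen_labels_def by blast
  then show "a \<in> Y"
  proof cases
    case vertex
    have "vertex (Vx i) \<in> Y"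
      using instance_atoms_forced vertex(1) by (auto simp: instance_atoms_def tau_def)
    with vertex show ?thesis
      by (intro reduct_model_forces_head[OF Y_model Y_sub UnI1[OF ground_PC_guess_labelV]])
        (auto simp: candidate_iff)
  next
    case edge
    have "edge (Vx j) (Vx i) \<in> Y"
      using instance_atoms_forced edge(1) by (auto simp: instance_atoms_def tau_def)
    with edge edge_in_V show ?thesis
      by (intro reduct_model_forces_head[OF Y_model Y_sub UnI1[OF ground_PC_guess_labelE]])
        (auto simp: candidate_iff)
  qed
qed

lemma received_signs_forced: "received_signs \<subseteq> Y"
proof
  fix a assume "a \<in> received_signs"
  then obtain j i where ji: "(j, i) \<in> E"
    and a: "a = receive (Vx i) (Sg (sign_mult (\<mu>' j) (\<sigma>' (j, i))))"
    unfolding received_signs_def by blast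
  have labels: "labelE (Vx j) (Vx i) (Sg (\<sigma>' (j, i))) \<in> Y" "labelV (Vx j) (Sg (\<mu>' j)) \<in> Y"
    using chosen_labels_forced ji edge_in_V unfolding chosen_labels_def by blast+
  show "a \<in> Y"
  proof (cases "\<mu>' j = \<sigma>' (j, i)")
    case True
    with ji a labels edge_in_V show ?thesis
      by (intro reduct_model_forces_head[OF Y_model Y_sub UnI1[OF ground_PC_receive_Pos]])
        (auto simp: candidate_iff)
  next
    case False
    with ji a labels edge_in_V show ?thesis
      by (intro reduct_model_forces_head[OF Y_model Y_sub UnI1[OF ground_PC_receive_Neg]])
        (auto simp: candidate_iff sign_mult_distinct)
  qed
qed

lemma candidate_forced: "candidate \<subseteq> Y"
  using instance_atoms_forced chosen_labels_forced received_signs_forced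
  unfolding candidate_def by blast

end

lemma candidate_answer_set: "answer_set program candidate"
  using candidate_model candidate_forced by (rule answer_setI)

end

theorem theorem2:
  fixes V :: "'v set" and E :: "('v \<times> 'v) set" and \<sigma> :: "'v \<times> 'v \<rightharpoonup> sign"
    and I :: "'v set" and \<mu> :: "'v \<rightharpoonup> sign"
  assumes "influence_graph V E \<sigma> I"
    and "partial_vlabel V \<mu>"
    and "consistent V E \<sigma> I \<mu>"
  shows "\<exists>X. answer_set (ground_PC V \<union> tau V E \<sigma> I \<mu>) X"
proof -
  obtain \<sigma>' \<mu>' where "consistent_extension V E \<sigma> I \<mu> \<sigma>' \<mu>'"
    using assms unfolding consistent_def consistent_extension_def by blast
  then show ?thesis
    using consistent_extension.candidate_answer_set by blast
qed

end
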